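(* Let $x \in \mathbb{R}^n$ be a deterministic clean signal, $y \in \mathbb{R}^n$ a deterministic vector of noisy data, and $f:\mathbb{R}^n \to \mathbb{R}^n$ a denoiser. Let $\tilde a, \tilde b, \tilde c$ be random vectors in $\mathbb{R}^n$ (the noisy references) such that (1) all entries of $\tilde a, \tilde b, \tilde c$ (i.e. the $3n$ random variables $\tilde a_i, \tilde b_i, \tilde c_i$, $1\le i\le n$) are mutually independent; (2) $\mathbb{E}[\tilde a_i] = \mathbb{E}[\tilde b_i] = \mathbb{E}[\tilde c_i] = x_i$ for $1 \le i \le n$; and, for each $i$, $\tilde a_i, \tilde b_i, \tilde c_i$ have the same finite variance. Define $$\mathrm{MSE} := \frac{1}{n}\sum_{i=1}^n (x_i - f(y)_i)^2, \qquad \widetilde{\mathrm{uMSE}} := \frac{1}{n}\sum_{i=1}^n \left[(\tilde a_i - f(y)_i)^2 - \frac{(\tilde b_i - \tilde c_i)^2}{2}\right].$$ Then $\mathbb{E}[\widetilde{\mathrm{uMSE}}] = \mathrm{MSE}$.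
   Context: The clean signal $x$, the data $y$ and hence the denoised estimate $f(y)$ are deterministic; only the references $\tilde a,\tilde b,\tilde c$ are random. *)

theory Defs
  imports "HOL-Analysis.Analysis" "HOL-Probability.Probability"
begin

text \<open>The 3n reference entries indexed by a sum type: Inl i is the i-th entry of a,
  Inr (Inl i) of b, Inr (Inr i) of c.\<close>
definition ref_entries ::
  "('m \<Rightarrow> real ^ 'n) \<Rightarrow> ('m \<Rightarrow> real ^ 'n) \<Rightarrow> ('m \<Rightarrow> real ^ 'n) \<Rightarrow> ('n + 'n + 'n) \<Rightarrow> 'm \<Rightarrow> real"
  where "ref_entries a b c k \<omega> = (case k of Inl i \<Rightarrow> a \<omega> $ i | Inr (Inl i) \<Rightarrow> b \<omega> $ i | Inr (Inr i) \<Rightarrow> c \<omega> $ i)"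

end

theory Submission
  imports Defs
begin

text \<open>
  Coordinatewise, expanding the squares gives
  \<open>E[(a - t)\<^sup>2] = Var a + (x - t)\<^sup>2\<close> and, since \<open>b\<close> and \<open>c\<close> are independent,
  \<open>E[(b - c)\<^sup>2] = Var b + Var c\<close>. With equal variances the correction term
  \<open>(b - c)\<^sup>2 / 2\<close> therefore removes exactly the noise variance of \<open>a\<close>, and linearity
  of expectation finishes the proof.
\<close>

lemma ref_entries_Inr_Inl: "ref_entries a b c (Inr (Inl i)) = (\<lambda>\<omega>. b \<omega> $ i)"
  and ref_entries_Inr_Inr: "ref_entries a b c (Inr (Inr i)) = (\<lambda>\<omega>. c \<omega> $ i)"
  by (simp_all add: fun_eq_iff ref_entries_def)

lemma integrable_power2_diff:
  fixes X Y :: "'a \<Rightarrow> real"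
  assumes "integrable M (\<lambda>\<omega>. (X \<omega>)\<^sup>2)" "integrable M (\<lambda>\<omega>. (Y \<omega>)\<^sup>2)"
    and "integrable M (\<lambda>\<omega>. X \<omega> * Y \<omega>)"
  shows "integrable M (\<lambda>\<omega>. (X \<omega> - Y \<omega>)\<^sup>2)"
  using assms by (simp add: power2_diff mult.assoc)

lemma (in finite_measure) integrable_power2_diff_const:
  fixes X :: "'a \<Rightarrow> real"
  assumes "integrable M X" "integrable M (\<lambda>\<omega>. (X \<omega>)\<^sup>2)"
  shows "integrable M (\<lambda>\<omega>. (X \<omega> - t)\<^sup>2)"
  using assms by (intro integrable_power2_diff) simp_all

context prob_space
begin

lemma indep_vars_integral_mult:
  fixes X :: "'i \<Rightarrow> 'a \<Rightarrow> 'b::{real_normed_field, banach, second_countable_topology}"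
  assumes indep: "indep_vars (\<lambda>_. borel) X I" and "i \<in> I" "j \<in> I" "i \<noteq> j"
    and "integrable M (X i)" "integrable M (X j)"
  shows "expectation (\<lambda>\<omega>. X i \<omega> * X j \<omega>) = expectation (X i) * expectation (X j)"
    and "integrable M (\<lambda>\<omega>. X i \<omega> * X j \<omega>)"
proof -
  have "indep_vars (\<lambda>_. borel) X {i, j}"
    using indep_vars_subset[OF indep] assms(2,3) by simp
  moreover have "\<And>k. k \<in> {i, j} \<Longrightarrow> integrable M (X k)"
    using assms(5,6) by blast
  ultimately show "expectation (\<lambda>\<omega>. X i \<omega> * X j \<omega>) = expectation (X i) * expectation (X j)"
    and "integrable M (\<lambda>\<omega>. X i \<omega> * X j \<omega>)"
    using indep_vars_lebesgue_integral[of "{i, j}" X] indep_vars_integrable[of "{i, j}" X] \<open>i \<noteq> j\<close>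
    by simp_all
qed

lemma expectation_power2_diff_const:
  fixes X :: "'a \<Rightarrow> real"
  assumes "integrable M X" "integrable M (\<lambda>\<omega>. (X \<omega>)\<^sup>2)"
  shows "expectation (\<lambda>\<omega>. (X \<omega> - t)\<^sup>2) = variance X + (expectation X - t)\<^sup>2"
  using assms by (simp add: variance_eq power2_diff prob_space power2_eq_square algebra_simps)

lemma expectation_power2_diff_uncorrelated:
  fixes X Y :: "'a \<Rightarrow> real"
  assumes "integrable M X" "integrable M (\<lambda>\<omega>. (X \<omega>)\<^sup>2)"
    and "integrable M Y" "integrable M (\<lambda>\<omega>. (Y \<omega>)\<^sup>2)"
    and "integrable M (\<lambda>\<omega>. X \<omega> * Y \<omega>)"
    and "expectation (\<lambda>\<omega>. X \<omega> * Y \<omega>) = expectation X * expectation Y"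
  shows "expectation (\<lambda>\<omega>. (X \<omega> - Y \<omega>)\<^sup>2)
           = variance X + variance Y + (expectation X - expectation Y)\<^sup>2"
proof -
  have "(\<lambda>\<omega>. (X \<omega> - Y \<omega>)\<^sup>2) = (\<lambda>\<omega>. (X \<omega>)\<^sup>2 + (Y \<omega>)\<^sup>2 - 2 * (X \<omega> * Y \<omega>))"
    by (simp add: power2_diff mult.assoc)
  then have "expectation (\<lambda>\<omega>. (X \<omega> - Y \<omega>)\<^sup>2)
      = expectation (\<lambda>\<omega>. (X \<omega>)\<^sup>2) + expectation (\<lambda>\<omega>. (Y \<omega>)\<^sup>2)
        - 2 * (expectation X * expectation Y)"
    using assms by simp
  also have "\<dots> = variance X + variance Y + (expectation X - expectation Y)\<^sup>2"
    unfolding variance_eq[OF assms(1,2)] variance_eq[OF assms(3,4)] by (simp add: power2_diff)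
  finally show ?thesis .
qed

lemma expectation_noise_corrected_square_error:
  fixes A B C :: "'a \<Rightarrow> real"
  assumes A: "integrable M A" "integrable M (\<lambda>\<omega>. (A \<omega>)\<^sup>2)"
    and B: "integrable M B" "integrable M (\<lambda>\<omega>. (B \<omega>)\<^sup>2)"
    and C: "integrable M C" "integrable M (\<lambda>\<omega>. (C \<omega>)\<^sup>2)"
    and BC: "integrable M (\<lambda>\<omega>. B \<omega> * C \<omega>)"
      "expectation (\<lambda>\<omega>. B \<omega> * C \<omega>) = expectation B * expectation C"
    and mean: "expectation B = expectation A" "expectation C = expectation A"
    and var: "variance B = variance A" "variance C = variance A"
  shows "expectation (\<lambda>\<omega>. (A \<omega> - t)\<^sup>2 - (B \<omega> - C \<omega>)\<^sup>2 / 2) = (expectation A - t)\<^sup>2"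
proof -
  have "expectation (\<lambda>\<omega>. (A \<omega> - t)\<^sup>2 - (B \<omega> - C \<omega>)\<^sup>2 / 2)
      = expectation (\<lambda>\<omega>. (A \<omega> - t)\<^sup>2) - expectation (\<lambda>\<omega>. (B \<omega> - C \<omega>)\<^sup>2) / 2"
    using integrable_power2_diff_const[OF A] integrable_power2_diff[OF B(2) C(2) BC(1)] by simp
  also have "\<dots> = (expectation A - t)\<^sup>2"
    \<comment> \<open>with \<open>t\<close> schematic this loops: \<open>variance A\<close> matches the left-hand side\<close>
    unfolding expectation_power2_diff_const[OF A, of t] expectation_power2_diff_uncorrelated[OF B C BC] var
    unfolding mean by simp
  finally show ?thesis .
qed

end

theorem theorem4p1:
  fixes M :: "'m measure"
    and x y :: "real ^ 'n"
    and f :: "real ^ 'n \<Rightarrow> real ^ 'n"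
    and a b c :: "'m \<Rightarrow> real ^ 'n"
  assumes "prob_space M"
    and indep: "prob_space.indep_vars M (\<lambda>_. borel) (ref_entries a b c) UNIV"
    and int_a: "\<And>i. integrable M (\<lambda>\<omega>. a \<omega> $ i)"
    and int_b: "\<And>i. integrable M (\<lambda>\<omega>. b \<omega> $ i)"
    and int_c: "\<And>i. integrable M (\<lambda>\<omega>. c \<omega> $ i)"
    and sq_a: "\<And>i. integrable M (\<lambda>\<omega>. (a \<omega> $ i)\<^sup>2)"
    and sq_b: "\<And>i. integrable M (\<lambda>\<omega>. (b \<omega> $ i)\<^sup>2)"
    and sq_c: "\<And>i. integrable M (\<lambda>\<omega>. (c \<omega> $ i)\<^sup>2)"
    and mean_a: "\<And>i. prob_space.expectation M (\<lambda>\<omega>. a \<omega> $ i) = x $ i"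
    and mean_b: "\<And>i. prob_space.expectation M (\<lambda>\<omega>. b \<omega> $ i) = x $ i"
    and mean_c: "\<And>i. prob_space.expectation M (\<lambda>\<omega>. c \<omega> $ i) = x $ i"
    and var_ab: "\<And>i. prob_space.variance M (\<lambda>\<omega>. a \<omega> $ i) = prob_space.variance M (\<lambda>\<omega>. b \<omega> $ i)"
    and var_ac: "\<And>i. prob_space.variance M (\<lambda>\<omega>. a \<omega> $ i) = prob_space.variance M (\<lambda>\<omega>. c \<omega> $ i)"
  shows "prob_space.expectation M
           (\<lambda>\<omega>. (1 / real CARD('n)) *
              (\<Sum>i\<in>UNIV. (a \<omega> $ i - f y $ i)\<^sup>2 - (b \<omega> $ i - c \<omega> $ i)\<^sup>2 / 2))
         = (1 / real CARD('n)) * (\<Sum>i\<in>UNIV. (x $ i - f y $ i)\<^sup>2)"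
proof -
  interpret prob_space M by fact
  have uncorrelated_bc: "integrable M (\<lambda>\<omega>. b \<omega> $ i * c \<omega> $ i)"
    "expectation (\<lambda>\<omega>. b \<omega> $ i * c \<omega> $ i) = expectation (\<lambda>\<omega>. b \<omega> $ i) * expectation (\<lambda>\<omega>. c \<omega> $ i)"
    for i
    using indep_vars_integral_mult[OF indep, of "Inr (Inl i)" "Inr (Inr i)"] int_b int_c
    by (simp_all add: ref_entries_Inr_Inl ref_entries_Inr_Inr)
  have integrable_term: "integrable M (\<lambda>\<omega>. (a \<omega> $ i - f y $ i)\<^sup>2 - (b \<omega> $ i - c \<omega> $ i)\<^sup>2 / 2)"
    for i
    using integrable_power2_diff_const[OF int_a sq_a]
      integrable_power2_diff[OF sq_b sq_c uncorrelated_bc(1)]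
    by simp
  have expectation_term: "expectation (\<lambda>\<omega>. (a \<omega> $ i - f y $ i)\<^sup>2 - (b \<omega> $ i - c \<omega> $ i)\<^sup>2 / 2)
      = (x $ i - f y $ i)\<^sup>2" for i
    using expectation_noise_corrected_square_error[OF int_a sq_a int_b sq_b int_c sq_c uncorrelated_bc]
      mean_a mean_b mean_c var_ab var_ac by simp
  show ?thesis
    by (simp add: Bochner_Integration.integral_sum integrable_term expectation_term)
qed

end
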